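(* Let $a\in\mathbb{Q}\setminus\{-1,0,1\}$ and let $z\in\mathbb{C}$ with $|z|\le1$. For any positive real numbers $\xi<x$, \begin{multline*} \sum_{\substack{p\le x \\ \nu_p(a)=0}} z^{\Omega((p-1)/\mathrm{ord}_p(a))} = \sum_{\ell\mid Q_\xi} z^{\Omega(\ell)} (1-z^{-1})^{\omega(\ell)} \#\{ p\le x : \nu_p(a)=0,\ \ell \mid (p-1)/\mathrm{ord}_p(a) \} \\ + O\biggl( \sum_{\xi<q^k\le x} \#\{ p\le x : \nu_p(a)=0,\ q^k \mid (p-1)/\mathrm{ord}_p(a) \} \biggr), \end{multline*} with an absolute implied constant, where the error sum is over prime powers $q^k$ ($k\ge1$) in $(\xi,x]$.
   Context: $p,q$ denote primes. $\nu_p(a)$ is the $p$-adic valuation of $a$; $\mathrm{ord}_p(a)$ is the multiplicative order of $a$ mod $p$; $\omega,\Omega$ count prime factors without/with multiplicity. For $\xi>0$, $Q_\xi$ is the least common multiple of all positive integers $\le\xi$. The expression $z^{\Omega(\ell)}(1-z^{-1})^{\omega(\ell)}$ means the polynomial $z^{\Omega(\ell)-\omega(\ell)}(z-1)^{\omega(\ell)}$ (relevant at $z=0$), and $0^0=1$. *)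

theory Defs
  imports "HOL-Analysis.Analysis" "HOL-Number_Theory.Number_Theory"
begin

definition nu_rat :: "nat \<Rightarrow> rat \<Rightarrow> int" where
  "nu_rat p a = (let (n, d) = quotient_of a in
      int (multiplicity (int p) n) - int (multiplicity (int p) d))"

(* multiplicative order of a = n/d modulo p (for p not dividing n d):
   least k > 0 with (n/d)^k = 1 mod p, i.e. n^k = d^k mod p *)
definition ord_rat :: "nat \<Rightarrow> rat \<Rightarrow> nat" where
  "ord_rat p a = (let (n, d) = quotient_of a in
      (LEAST k. 0 < k \<and> [n ^ k = d ^ k] (mod int p)))"

definition omega_nat :: "nat \<Rightarrow> nat" where
  "omega_nat n = card (prime_factors n)"

definition Omega_nat :: "nat \<Rightarrow> nat" where
  "Omega_nat n = size (prime_factorization n)"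

definition Q_lcm :: "real \<Rightarrow> nat" where
  "Q_lcm xi = Lcm {1..nat \<lfloor>xi\<rfloor>}"

(* z^Omega(l) (1 - 1/z)^omega(l), read as the polynomial z^(Omega-omega) (z-1)^omega *)
definition wt :: "complex \<Rightarrow> nat \<Rightarrow> complex" where
  "wt z l = z ^ (Omega_nat l - omega_nat l) * (z - 1) ^ omega_nat l"

definition cnt :: "rat \<Rightarrow> real \<Rightarrow> nat \<Rightarrow> nat" where
  "cnt a x m = card {p. prime p \<and> real p \<le> x \<and> nu_rat p a = 0
                      \<and> m dvd ((p - 1) div ord_rat p a)}"

end

theory Submission
  imports Defs
begin

(* Summing the weights wt z l over the divisors of g gives z ^ Omega g (check it on prime powers,
   where it telescopes, and use multiplicativity). Hence, writing m p = (p - 1) / ord_p(a) and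
   swapping the order of summation, the main term equals the sum over p of
   z ^ Omega (gcd Q_xi (m p)). This agrees with z ^ Omega (m p) unless m p does not divide Q_xi;
   then some prime power q^k dividing m p does not divide Q_xi, so xi < q^k <= m p < p <= x.
   Each such p contributes at most 2 to the difference and is counted at least once by the
   error sum, so C = 2 works. *)

lemma fermat_theorem_int:
  fixes p :: nat and n :: int
  assumes "prime p" and "\<not> int p dvd n"
  shows "[n ^ (p - 1) = 1] (mod int p)"
proof -
  interpret residues "int p" "residue_ring (int p)"
    using prime_gt_1_nat[OF assms(1)] by unfold_locales simp_all
  have "prime (int p)"
    using assms(1) by simp
  then have "coprime n (int p)"
    using assms(2) by (metis prime_imp_coprime coprime_commute)
  then show ?thesis
    using euler_theorem totient_prime[OF assms(1)] by simp
qed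

lemma finite_nat_le_real: "finite {n::nat. real n \<le> x}"
  by (rule finite_subset[of _ "{..nat \<lfloor>x\<rfloor>}"]) (auto intro: le_nat_floor)

lemma sum_mult_card_filter_swap:
  fixes w :: "'b \<Rightarrow> 'c::comm_semiring_1"
  assumes "finite A" "finite B"
  shows "(\<Sum>b\<in>B. w b * of_nat (card {a\<in>A. R a b})) = (\<Sum>a\<in>A. \<Sum>b\<in>{b\<in>B. R a b}. w b)"
proof -
  have "(\<Sum>b\<in>B. w b * of_nat (card {a\<in>A. R a b})) = (\<Sum>b\<in>B. \<Sum>a\<in>A. if R a b then w b else 0)"
    using assms(1) by (simp add: sum.inter_filter[symmetric] mult.commute)
  also have "\<dots> = (\<Sum>a\<in>A. \<Sum>b\<in>B. if R a b then w b else 0)"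
    by (rule sum.swap)
  also have "\<dots> = (\<Sum>a\<in>A. \<Sum>b\<in>{b\<in>B. R a b}. w b)"
    using assms(2) by (simp add: sum.inter_filter)
  finally show ?thesis .
qed

lemma sum_divisors_mult_coprime:
  fixes f :: "nat \<Rightarrow> 'a::comm_monoid_add"
  assumes "coprime a b" "a \<noteq> 0" "b \<noteq> 0"
  shows "(\<Sum>d | d dvd a * b. f d) = (\<Sum>d1 | d1 dvd a. \<Sum>d2 | d2 dvd b. f (d1 * d2))"
proof -
  have "bij_betw (\<lambda>(d1, d2). d1 * d2) ({d. d dvd a} \<times> {d. d dvd b}) {d. d dvd a * b}"
  proof (rule bij_betwI')
    fix u v assume "u \<in> {d. d dvd a} \<times> {d. d dvd b}" "v \<in> {d. d dvd a} \<times> {d. d dvd b}"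
    moreover have "coprime d1 e2" if "d1 dvd a" "e2 dvd b" for d1 e2
      using assms(1) that coprime_divisors by blast
    ultimately show "((\<lambda>(d1, d2). d1 * d2) u = (\<lambda>(d1, d2). d1 * d2) v) = (u = v)"
      by (auto simp: coprime_crossproduct_nat)
  qed (auto intro: mult_dvd_mono dest!: division_decomp)
  then have "(\<Sum>d | d dvd a * b. f d) = (\<Sum>(d1, d2) \<in> {d. d dvd a} \<times> {d. d dvd b}. f (d1 * d2))"
    by (simp add: sum.reindex_bij_betw[symmetric] case_prod_unfold)
  also have "\<dots> = (\<Sum>d1 | d1 dvd a. \<Sum>d2 | d2 dvd b. f (d1 * d2))"
    using assms by (simp add: sum.cartesian_product)
  finally show ?thesis .
qed

lemma omega_nat_le_Omega_nat: "omega_nat n \<le> Omega_nat n"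
proof -
  have "card (set_mset M) \<le> size M" for M :: "nat multiset"
    by (induction M) (auto simp: card_insert_if)
  then show ?thesis
    unfolding omega_nat_def Omega_nat_def by blast
qed

lemma Omega_nat_mult: "a \<noteq> 0 \<Longrightarrow> b \<noteq> 0 \<Longrightarrow> Omega_nat (a * b) = Omega_nat a + Omega_nat b"
  unfolding Omega_nat_def by (simp add: prime_factorization_mult)

lemma omega_nat_mult_coprime:
  assumes "coprime a b" "a \<noteq> 0" "b \<noteq> 0"
  shows "omega_nat (a * b) = omega_nat a + omega_nat b"
proof -
  have "prime_factors a \<inter> prime_factors b = {}"
    using assms(1) by (metis disjoint_iff in_prime_factors_iff coprime_common_divisor not_prime_unit)
  then show ?thesis
    unfolding omega_nat_def by (simp add: prime_factors_product[OF assms(2,3)] card_Un_disjoint)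
qed

lemma Omega_nat_prime_power: "prime q \<Longrightarrow> Omega_nat (q ^ k) = k"
  unfolding Omega_nat_def by (simp add: prime_factorization_prime_power)

lemma omega_nat_prime_power: "prime q \<Longrightarrow> k > 0 \<Longrightarrow> omega_nat (q ^ k) = 1"
  unfolding omega_nat_def by (simp add: prime_factorization_prime_power)

lemma wt_mult_coprime:
  assumes "coprime a b" "a \<noteq> 0" "b \<noteq> 0"
  shows "wt z (a * b) = wt z a * wt z b"
proof -
  have "Omega_nat (a * b) - omega_nat (a * b) = (Omega_nat a - omega_nat a) + (Omega_nat b - omega_nat b)"
    using Omega_nat_mult[OF assms(2,3)] omega_nat_mult_coprime[OF assms]
      omega_nat_le_Omega_nat[of a] omega_nat_le_Omega_nat[of b] by simp
  then show ?thesis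
    unfolding wt_def by (simp add: omega_nat_mult_coprime[OF assms] power_add)
qed

lemma sum_wt_divisors_prime_power:
  assumes "prime q"
  shows "(\<Sum>l | l dvd q ^ k. wt z l) = z ^ k"
proof -
  have "{l. l dvd q ^ k} = (\<lambda>j. q ^ j) ` {..k}"
    using divides_primepow_nat[OF assms] by auto
  moreover have "inj_on (\<lambda>j. q ^ j) {..k}"
    using prime_gt_1_nat[OF assms] by (auto intro!: inj_onI simp: power_inject_exp)
  ultimately have "(\<Sum>l | l dvd q ^ k. wt z l) = (\<Sum>j\<le>k. wt z (q ^ j))"
    by (simp add: sum.reindex)
  also have "\<dots> = z ^ k"
  proof (induction k)
    case 0
    then show ?case
      by (simp add: wt_def omega_nat_def Omega_nat_def)
  next
    case (Suc k)
    have "wt z (q ^ Suc k) = z ^ k * (z - 1)"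
      unfolding wt_def Omega_nat_prime_power[OF assms] omega_nat_prime_power[OF assms zero_less_Suc]
      by simp
    then show ?case
      using Suc by (simp add: algebra_simps)
  qed
  finally show ?thesis .
qed

lemma sum_wt_divisors:
  assumes "g \<noteq> 0"
  shows "(\<Sum>l | l dvd g. wt z l) = z ^ Omega_nat g"
  using assms
proof (induction g rule: less_induct)
  case (less g)
  show ?case
  proof (cases "g = 1")
    case True
    then show ?thesis
      by (simp add: wt_def omega_nat_def Omega_nat_def)
  next
    case False
    then obtain q where q: "prime q" "q dvd g"
      using prime_factor_nat by blast
    define k where "k = multiplicity q g"
    define r where "r = g div q ^ k"
    have g: "g = q ^ k * r"
      unfolding r_def k_def by (simp add: multiplicity_dvd)
    have "k > 0"
      unfolding k_def using q less.prems by (simp add: prime_multiplicity_gt_zero_iff)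
    then have "1 < q ^ k"
      using prime_gt_1_nat[OF q(1)] one_less_power by blast
    have nonzero: "q ^ k \<noteq> 0" "r \<noteq> 0"
      using g less.prems by auto
    then have "r < g"
      using g \<open>1 < q ^ k\<close> by simp
    have "\<not> q dvd r"
      unfolding r_def k_def using q(1) less.prems by (intro multiplicity_decompose) (auto simp: not_prime_unit)
    then have "coprime (q ^ k) r"
      using q(1) by (simp add: prime_imp_coprime)
    have "(\<Sum>l | l dvd g. wt z l) = (\<Sum>d1 | d1 dvd q ^ k. \<Sum>d2 | d2 dvd r. wt z (d1 * d2))"
      unfolding g by (rule sum_divisors_mult_coprime[OF \<open>coprime (q ^ k) r\<close> nonzero])
    also have "\<dots> = (\<Sum>d1 | d1 dvd q ^ k. \<Sum>d2 | d2 dvd r. wt z d1 * wt z d2)"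
    proof (intro sum.cong refl)
      fix d1 d2 assume "d1 \<in> {d. d dvd q ^ k}" "d2 \<in> {d. d dvd r}"
      then show "wt z (d1 * d2) = wt z d1 * wt z d2"
        using \<open>coprime (q ^ k) r\<close> nonzero
        by (metis coprime_divisors dvd_0_left mem_Collect_eq wt_mult_coprime)
    qed
    also have "\<dots> = z ^ k * z ^ Omega_nat r"
      using sum_wt_divisors_prime_power[OF q(1)] less.IH[OF \<open>r < g\<close> nonzero(2)]
      by (simp add: sum_product[symmetric])
    also have "\<dots> = z ^ Omega_nat g"
      by (simp add: g Omega_nat_mult[OF nonzero] Omega_nat_prime_power[OF q(1)] power_add)
    finally show ?thesis .
  qed
qed

lemma Q_lcm_pos: "Q_lcm \<xi> > 0"
  unfolding Q_lcm_def by (simp flip: neq0_conv)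

lemma dvd_Q_lcm: "1 \<le> n \<Longrightarrow> real n \<le> \<xi> \<Longrightarrow> n dvd Q_lcm \<xi>"
  unfolding Q_lcm_def by (rule dvd_Lcm) (simp add: le_nat_floor)

lemma not_dvd_primepow_divisorE:
  fixes m Q :: nat
  assumes "m \<noteq> 0" "Q \<noteq> 0" "\<not> m dvd Q"
  obtains n where "primepow n" "n dvd m" "\<not> n dvd Q"
proof -
  obtain q where q: "prime q" "multiplicity q Q < multiplicity q m"
    using assms multiplicity_le_imp_dvd[of m Q] by (meson not_le)
  then have "primepow (q ^ multiplicity q m)"
    by simp
  moreover have "\<not> q ^ multiplicity q m dvd Q"
    using q assms(2) power_dvd_iff_le_multiplicity[of Q q "multiplicity q m"] prime_gt_1_nat[of q]
    by simp
  ultimately show ?thesis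
    using that multiplicity_dvd by blast
qed

lemma norm_sum_power_Omega_minus_divisor_sum_le:
  fixes S :: "'a set" and m :: "'a \<Rightarrow> nat" and z :: complex
  assumes "finite S" and "norm z \<le> 1"
    and "\<And>p. p \<in> S \<Longrightarrow> m p \<noteq> 0" and "\<And>p. p \<in> S \<Longrightarrow> real (m p) \<le> x"
  shows "norm ((\<Sum>p\<in>S. z ^ Omega_nat (m p))
              - (\<Sum>l | l dvd Q_lcm \<xi>. wt z l * of_nat (card {p\<in>S. l dvd m p})))
         \<le> 2 * (\<Sum>n | primepow n \<and> \<xi> < real n \<and> real n \<le> x. real (card {p\<in>S. n dvd m p}))"
proof -
  define Q where "Q = Q_lcm \<xi>"
  define P where "P = {n. primepow n \<and> \<xi> < real n \<and> real n \<le> x}"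
  have "finite P"
    unfolding P_def by (rule finite_subset[OF _ finite_nat_le_real]) auto
  have "Q \<noteq> 0"
    using Q_lcm_pos by (simp add: Q_def)
  have divisor_sum: "(\<Sum>l | l dvd Q. wt z l * of_nat (card {p\<in>S. l dvd m p}))
      = (\<Sum>p\<in>S. z ^ Omega_nat (gcd Q (m p)))"
  proof -
    have "(\<Sum>l | l dvd Q. wt z l * of_nat (card {p\<in>S. l dvd m p}))
        = (\<Sum>p\<in>S. \<Sum>l\<in>{l\<in>{l. l dvd Q}. l dvd m p}. wt z l)"
      using \<open>finite S\<close> \<open>Q \<noteq> 0\<close> by (intro sum_mult_card_filter_swap) auto
    also have "\<dots> = (\<Sum>p\<in>S. z ^ Omega_nat (gcd Q (m p)))"
      using \<open>Q \<noteq> 0\<close> by (intro sum.cong refl) (simp add: sum_wt_divisors[symmetric])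
    finally show ?thesis .
  qed
  have term_le: "norm (z ^ Omega_nat (m p) - z ^ Omega_nat (gcd Q (m p)))
      \<le> 2 * real (card {n\<in>P. n dvd m p})" if p: "p \<in> S" for p
  proof (cases "m p dvd Q")
    case True
    then show ?thesis
      by (simp add: gcd_nat.absorb2)
  next
    case False
    then obtain n where n: "primepow n" "n dvd m p" "\<not> n dvd Q"
      using not_dvd_primepow_divisorE assms(3)[OF p] \<open>Q \<noteq> 0\<close> by blast
    have "1 \<le> n"
      using primepow_gt_Suc_0[OF n(1)] by simp
    then have "\<xi> < real n"
      using n(3) dvd_Q_lcm[of n \<xi>] unfolding Q_def by linarith
    moreover have "real n \<le> x"
      using n(2) assms(3,4)[OF p] dvd_imp_le[of n "m p"] by simp
    ultimately have "n \<in> {n\<in>P. n dvd m p}"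
      using n unfolding P_def by simp
    then have "1 \<le> card {n\<in>P. n dvd m p}"
      using \<open>finite P\<close> by (auto simp: Suc_le_eq card_gt_0_iff)
    have "norm (z ^ Omega_nat (m p) - z ^ Omega_nat (gcd Q (m p)))
        \<le> norm (z ^ Omega_nat (m p)) + norm (z ^ Omega_nat (gcd Q (m p)))"
      by (rule norm_triangle_ineq4)
    also have "\<dots> \<le> 1 + 1"
      using assms(2) by (intro add_mono) (simp_all add: norm_power power_le_one)
    finally show ?thesis
      using \<open>1 \<le> card {n\<in>P. n dvd m p}\<close> by simp
  qed
  have "norm ((\<Sum>p\<in>S. z ^ Omega_nat (m p)) - (\<Sum>l | l dvd Q. wt z l * of_nat (card {p\<in>S. l dvd m p})))
      = norm (\<Sum>p\<in>S. z ^ Omega_nat (m p) - z ^ Omega_nat (gcd Q (m p)))"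
    by (simp add: divisor_sum sum_subtractf)
  also have "\<dots> \<le> (\<Sum>p\<in>S. norm (z ^ Omega_nat (m p) - z ^ Omega_nat (gcd Q (m p))))"
    by (rule norm_sum)
  also have "\<dots> \<le> (\<Sum>p\<in>S. 2 * real (card {n\<in>P. n dvd m p}))"
    by (rule sum_mono) (rule term_le)
  also have "\<dots> = 2 * (\<Sum>n\<in>P. real (card {p\<in>S. n dvd m p}))"
    using sum_mult_card_filter_swap[OF \<open>finite S\<close> \<open>finite P\<close>, of "\<lambda>_. 1::real" "\<lambda>p n. n dvd m p"]
    by (simp add: sum_distrib_left)
  finally show ?thesis
    unfolding Q_def P_def .
qed

lemma not_dvd_quotient_of_if_nu_rat_eq_0:
  assumes "prime p" "a \<noteq> 0" "nu_rat p a = 0" "quotient_of a = (n, d)"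
  shows "\<not> int p dvd n \<and> \<not> int p dvd d"
proof -
  have "n \<noteq> 0" "d \<noteq> 0"
    using assms(2,4) quotient_of_denom_pos[OF assms(4)] quotient_of_div[OF assms(4)] by auto
  moreover have "multiplicity (int p) n = multiplicity (int p) d"
    using assms(3,4) unfolding nu_rat_def by simp
  ultimately have "int p dvd n \<longleftrightarrow> int p dvd d"
    using assms(1) by (metis prime_multiplicity_gt_zero_iff prime_nat_int_transfer prime_imp_prime_elem)
  moreover have "\<not> (int p dvd n \<and> int p dvd d)"
    using quotient_of_coprime[OF assms(4)] assms(1)
    by (metis coprime_common_divisor not_prime_unit prime_nat_int_transfer)
  ultimately show ?thesis
    by blast
qed

lemma ord_rat_bounds:
  assumes "prime p" "a \<noteq> 0" "nu_rat p a = 0"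
  shows "0 < ord_rat p a" "ord_rat p a \<le> p - 1"
proof -
  obtain n d where nd: "quotient_of a = (n, d)"
    by fastforce
  then have "[n ^ (p - 1) = 1] (mod int p)" "[d ^ (p - 1) = 1] (mod int p)"
    using not_dvd_quotient_of_if_nu_rat_eq_0[OF assms] fermat_theorem_int[OF assms(1)] by blast+
  then have "[n ^ (p - 1) = d ^ (p - 1)] (mod int p)"
    using cong_trans cong_sym by blast
  define R where "R k \<longleftrightarrow> 0 < k \<and> [n ^ k = d ^ k] (mod int p)" for k
  have "R (p - 1)"
    unfolding R_def using \<open>[n ^ (p - 1) = d ^ (p - 1)] (mod int p)\<close> prime_gt_1_nat[OF assms(1)] by simp
  moreover have "ord_rat p a = (LEAST k. R k)"
    unfolding ord_rat_def nd R_def by simp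
  ultimately have "R (ord_rat p a)"
    using LeastI[of R] by simp
  then show "0 < ord_rat p a"
    unfolding R_def by simp
  show "ord_rat p a \<le> p - 1"
    using Least_le[of R, OF \<open>R (p - 1)\<close>] \<open>ord_rat p a = (LEAST k. R k)\<close> by simp
qed

lemma norm_sum_power_Omega_ord_rat_minus_divisor_sum_le:
  fixes a :: rat and z :: complex
  assumes "a \<noteq> 0" and z: "norm z \<le> 1"
  shows "norm ((\<Sum>p\<in>{p. prime p \<and> real p \<le> x \<and> nu_rat p a = 0}.
                  z ^ Omega_nat ((p - 1) div ord_rat p a))
              - (\<Sum>l\<in>{l. l dvd Q_lcm \<xi>}. wt z l * of_nat (cnt a x l)))
         \<le> 2 * (\<Sum>n\<in>{n. primepow n \<and> \<xi> < real n \<and> real n \<le> x}. real (cnt a x n))"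
proof -
  define S where "S = {p. prime p \<and> real p \<le> x \<and> nu_rat p a = 0}"
  define m where "m p = (p - 1) div ord_rat p a" for p
  have "finite S"
    unfolding S_def by (rule finite_subset[OF _ finite_nat_le_real]) auto
  have m_pos: "m p \<noteq> 0" and m_le: "real (m p) \<le> x" if "p \<in> S" for p
  proof -
    have p: "prime p" "real p \<le> x" "nu_rat p a = 0"
      using that by (auto simp: S_def)
    then have "0 < ord_rat p a" "ord_rat p a \<le> p - 1"
      using assms(1) ord_rat_bounds[of p a] by auto
    then show "m p \<noteq> 0"
      unfolding m_def by (simp add: div_greater_zero_iff)
    have "m p \<le> p"
      unfolding m_def by (meson div_le_dividend diff_le_self order_trans)
    then show "real (m p) \<le> x"
      using p(2) of_nat_le_iff order_trans by blast
  qed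
  have "cnt a x l = card {p\<in>S. l dvd m p}" for l
    unfolding cnt_def S_def m_def by (rule arg_cong[where f = card]) auto
  then show ?thesis
    using norm_sum_power_Omega_minus_divisor_sum_le[OF \<open>finite S\<close> z m_pos m_le]
    unfolding S_def m_def by simp
qed

theorem proposition2p5:
  "\<exists>C::real. \<forall>(a::rat) (z::complex) (\<xi>::real) (x::real).
     a \<notin> {-1, 0, 1} \<longrightarrow> norm z \<le> 1 \<longrightarrow> 0 < \<xi> \<longrightarrow> \<xi> < x \<longrightarrow>
     norm ((\<Sum>p\<in>{p. prime p \<and> real p \<le> x \<and> nu_rat p a = 0}.
               z ^ Omega_nat ((p - 1) div ord_rat p a))
           - (\<Sum>l\<in>{l. l dvd Q_lcm \<xi>}. wt z l * of_nat (cnt a x l)))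
     \<le> C * (\<Sum>n\<in>{n::nat. primepow n \<and> \<xi> < real n \<and> real n \<le> x}. real (cnt a x n))"
  using norm_sum_power_Omega_ord_rat_minus_divisor_sum_le by (intro exI[of _ 2]) auto

end
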